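(* Let $\alpha_1,\ldots,\alpha_r>0$, $\beta\ge 0$ and $d>1$ be real numbers. For $1\le i\le r$ and $n\in\mathbb{N}=\{0,1,2,\ldots\}$ define intervals $I_{i,n}=[\alpha_i d^n-\beta,\ \alpha_i d^n+\beta]$, and let $I=\bigcup_{1\le i\le r}\bigcup_{n\in\mathbb{N}}I_{i,n}$. Then there are constants $C_1,C_2>0$, depending only on $\alpha_1,\ldots,\alpha_r,\beta,d$, such that for every $T\ge C_1$ the set $[0,T]\setminus I$ contains an interval of length at least $C_2T/\log(T)$. *)

theory Defs
  imports "HOL-Analysis.Analysis"
begin

definition I_int :: "(nat \<Rightarrow> real) \<Rightarrow> real \<Rightarrow> real \<Rightarrow> nat \<Rightarrow> nat \<Rightarrow> real set" where
  "I_int \<alpha> \<beta> d i n = {\<alpha> i * d ^ n - \<beta> .. \<alpha> i * d ^ n + \<beta>}"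

definition I_union :: "nat \<Rightarrow> (nat \<Rightarrow> real) \<Rightarrow> real \<Rightarrow> real \<Rightarrow> real set" where
  "I_union r \<alpha> \<beta> d = (\<Union>i\<in>{1..r}. \<Union>n. I_int \<alpha> \<beta> d i n)"

end

theory Submission
  imports Defs
begin

text \<open>Each sequence \<open>\<alpha>\<^sub>i d\<^sup>n\<close> has at most one term in \<open>[T/d, T)\<close>, so at most \<open>r\<close> centers
  of the intervals \<open>I\<^sub>i\<^sub>,\<^sub>n\<close> lie there. Cutting \<open>[T/d, T)\<close> into \<open>r + 1\<close> cells of equal length,
  one cell contains no center, and shrinking it by \<open>\<beta> + 1\<close> at both ends leaves a gap of
  length proportional to \<open>T\<close>, which is even more than \<open>T / log T\<close>.\<close>

definition I_centers :: "nat \<Rightarrow> (nat \<Rightarrow> real) \<Rightarrow> real \<Rightarrow> real set" where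
  "I_centers r \<alpha> d = {\<alpha> i * d ^ n | i n. i \<in> {1..r}}"

lemma I_union_eq_thickened_centers:
  "I_union r \<alpha> \<beta> d = (\<Union>c\<in>I_centers r \<alpha> d. {c - \<beta>..c + \<beta>})"
  unfolding I_union_def I_int_def I_centers_def by blast

lemma geometric_exponent_eq_Least:
  fixes a d x :: real
  assumes "d > 1" "a > 0" "x \<le> a * d ^ n" "a * d ^ n < d * x"
  shows "n = (LEAST m. x \<le> a * d ^ m)"
proof -
  define N where "N = (LEAST m. x \<le> a * d ^ m)"
  have "N \<le> n" unfolding N_def using assms(3) by (rule Least_le)
  have "x \<le> a * d ^ N" unfolding N_def using assms(3) by (rule LeastI)
  show ?thesis
    unfolding N_def[symmetric]
  proof (rule ccontr)
    assume "n \<noteq> N"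
    with \<open>N \<le> n\<close> have "d ^ Suc N \<le> d ^ n" using assms(1) by (intro power_increasing) auto
    then have "d * (a * d ^ N) \<le> a * d ^ n" using assms(2) by simp
    moreover have "d * x \<le> d * (a * d ^ N)" using \<open>x \<le> a * d ^ N\<close> assms(1) by simp
    ultimately show False using assms(4) by linarith
  qed
qed

lemma I_centers_in_dilation:
  assumes "\<forall>i\<in>{1..r}. \<alpha> i > 0" "d > 1"
  shows "finite (I_centers r \<alpha> d \<inter> {x..<d * x})"
    and "card (I_centers r \<alpha> d \<inter> {x..<d * x}) \<le> r"
proof -
  let ?first = "\<lambda>i. \<alpha> i * d ^ (LEAST m. x \<le> \<alpha> i * d ^ m)"
  have sub: "I_centers r \<alpha> d \<inter> {x..<d * x} \<subseteq> ?first ` {1..r}"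
  proof
    fix c assume "c \<in> I_centers r \<alpha> d \<inter> {x..<d * x}"
    then obtain i n where "i \<in> {1..r}" "c = \<alpha> i * d ^ n" "x \<le> c" "c < d * x"
      unfolding I_centers_def by auto
    moreover have "n = (LEAST m. x \<le> \<alpha> i * d ^ m)"
      using calculation assms by (intro geometric_exponent_eq_Least) auto
    ultimately show "c \<in> ?first ` {1..r}" by auto
  qed
  show "finite (I_centers r \<alpha> d \<inter> {x..<d * x})"
    using sub by (rule finite_subset) simp
  have "card (I_centers r \<alpha> d \<inter> {x..<d * x}) \<le> card (?first ` {1..r})"
    using sub by (intro card_mono) auto
  also have "\<dots> \<le> r"
    using card_image_le[of "{1..r}" ?first] by simp
  finally show "card (I_centers r \<alpha> d \<inter> {x..<d * x}) \<le> r" .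
qed

lemma pigeonhole_empty_cell:
  fixes P :: "real set" and x l :: real
  assumes "finite P" "card P \<le> r" "l > 0"
  obtains k :: nat where "k \<le> r" "\<forall>p\<in>P. p \<notin> {x + k * l..<x + (k + 1) * l}"
proof -
  define cell where "cell p = nat \<lfloor>(p - x) / l\<rfloor>" for p
  have "card (cell ` P) \<le> r"
    using card_image_le[OF assms(1), of cell] assms(2) by linarith
  then have "\<not> {0..r} \<subseteq> cell ` P"
    using card_mono[of "cell ` P" "{0..r}"] assms(1) by force
  then obtain k where k: "k \<le> r" "k \<notin> cell ` P" by (auto simp: subset_eq)
  have "p \<notin> {x + k * l..<x + (k + 1) * l}" if "p \<in> P" for p
  proof
    assume "p \<in> {x + k * l..<x + (k + 1) * l}"
    then have "real k \<le> (p - x) / l" "(p - x) / l < real k + 1"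
      using assms(3) by (auto simp: field_simps)
    then have "\<lfloor>(p - x) / l\<rfloor> = int k" by (simp add: floor_eq_iff)
    then have "cell p = k" unfolding cell_def by simp
    with k(2) that show False by auto
  qed
  with k(1) show thesis by (intro that) auto
qed

lemma gap_in_top_scale:
  assumes "\<forall>i\<in>{1..r}. \<alpha> i > 0" "\<beta> \<ge> 0" "d > 1" "T > 0"
  shows "\<exists>a b. b - a \<ge> (T - T / d) / (r + 1) - 2 * \<beta> - 2 \<and>
                {a..b} \<subseteq> {T / d..T} - I_union r \<alpha> \<beta> d"
proof -
  define x where "x = T / d"
  define l where "l = (T - x) / (r + 1)"
  define P where "P = I_centers r \<alpha> d \<inter> {x..<d * x}"
  have "d * x = T" "x < T"
    using assms by (auto simp: x_def divide_less_eq)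
  have "l > 0" using \<open>x < T\<close> by (simp add: l_def)
  have x_end: "x + (r + 1) * l = T" by (simp add: l_def)
  obtain k :: nat where "k \<le> r" and empty_cell: "\<forall>p\<in>P. p \<notin> {x + k * l..<x + (k + 1) * l}"
    using pigeonhole_empty_cell I_centers_in_dilation[OF assms(1,3)] \<open>l > 0\<close>
    unfolding P_def by blast
  have "real (k + 1) * l \<le> real (r + 1) * l"
    using \<open>k \<le> r\<close> \<open>l > 0\<close> by (intro mult_right_mono) auto
  then have cell_end: "x + (k + 1) * l \<le> T" using x_end by simp
  have cell_start: "x \<le> x + k * l" using \<open>l > 0\<close> by simp
  have cell_in: "{x + k * l..<x + (k + 1) * l} \<subseteq> {x..<d * x}"
    using cell_start cell_end \<open>d * x = T\<close> by auto
  \<comment> \<open>The margin \<open>1\<close> keeps the closed gap away from the open right end of the cell.\<close>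
  define a where "a = x + k * l + \<beta> + 1"
  define b where "b = x + (k + 1) * l - \<beta> - 1"
  have "b - a = l - 2 * \<beta> - 2" by (simp add: a_def b_def algebra_simps)
  moreover have "{a..b} \<subseteq> {x..T}"
    using cell_start cell_end assms(2) by (auto simp: a_def b_def)
  moreover have "y \<notin> {c - \<beta>..c + \<beta>}" if "y \<in> {a..b}" "c \<in> I_centers r \<alpha> d" for y c
  proof
    assume "y \<in> {c - \<beta>..c + \<beta>}"
    with \<open>y \<in> {a..b}\<close> have "c \<in> {x + k * l..<x + (k + 1) * l}"
      by (auto simp: a_def b_def)
    with \<open>c \<in> I_centers r \<alpha> d\<close> cell_in empty_cell show False
      unfolding P_def by blast
  qed
  ultimately show ?thesis
    unfolding I_union_eq_thickened_centers x_def l_def by (intro exI[of _ a] exI[of _ b]) auto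
qed

theorem lemma4p3:
  fixes r :: nat and \<alpha> :: "nat \<Rightarrow> real" and \<beta> d :: real
  assumes "\<forall>i\<in>{1..r}. \<alpha> i > 0" and "\<beta> \<ge> 0" and "d > 1"
  shows "\<exists>C1 C2. C1 > 0 \<and> C2 > 0 \<and>
           (\<forall>T. T \<ge> C1 \<longrightarrow>
              (\<exists>a b. b - a \<ge> C2 * T / ln T \<and> {a..b} \<subseteq> {0..T} - I_union r \<alpha> \<beta> d))"
proof -
  define q where "q = (1 - 1 / d) / (r + 1)"
  define C1 where "C1 = max 3 (4 * (\<beta> + 1) / q)"
  have "q > 0" using assms(3) by (simp add: q_def)
  have "\<exists>a b. b - a \<ge> q / 2 * T / ln T \<and> {a..b} \<subseteq> {0..T} - I_union r \<alpha> \<beta> d"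
    if "T \<ge> C1" for T
  proof -
    have "T \<ge> 3" "q * T \<ge> 4 * (\<beta> + 1)"
      using that \<open>q > 0\<close> by (auto simp: C1_def field_simps)
    have "(T - T / d) / (r + 1) = q * T" by (simp add: q_def field_simps)
    then obtain a b where gap: "b - a \<ge> q * T - 2 * \<beta> - 2"
      and sub: "{a..b} \<subseteq> {T / d..T} - I_union r \<alpha> \<beta> d"
      using gap_in_top_scale[OF assms, of T] \<open>T \<ge> 3\<close> by auto
    have "ln T \<ge> 1" using \<open>T \<ge> 3\<close> exp_le by (subst ln_ge_iff) auto
    then have "q / 2 * T / ln T \<le> q / 2 * T / 1"
      using \<open>q > 0\<close> \<open>T \<ge> 3\<close> by (intro divide_left_mono) auto
    also have "\<dots> \<le> b - a" using gap \<open>q * T \<ge> 4 * (\<beta> + 1)\<close> by (simp add: field_simps)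
    finally have "q / 2 * T / ln T \<le> b - a" .
    moreover have "{T / d..T} \<subseteq> {0..T}" using \<open>T \<ge> 3\<close> assms(3) by simp
    with sub have "{a..b} \<subseteq> {0..T} - I_union r \<alpha> \<beta> d" by blast
    ultimately show ?thesis by blast
  qed
  moreover have "C1 > 0" "q / 2 > 0" using \<open>q > 0\<close> by (auto simp: C1_def)
  ultimately show ?thesis by blast
qed

end
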